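(* Let $q\ge2$, $r\ge1$, $\rho\ge2$, $s\ge1$ be integers, $N=r+\rho-1$, $n=sN$, and $\mathcal{R}_{t+1}=\{tN+1,\dots,(t+1)N\}$ for $t=0,\dots,s-1$. Let $\mathcal{C}\subseteq Q^n$ ($|Q|=q$) be a code with minimum distance $d$ such that $\mathcal{C}|_{\mathcal{R}_i}$ has minimum distance at least $\rho$ for all $i$. Let $T:=\{\mathbf{i}=(i_1,\dots,i_s)\mid i_1+\cdots+i_s\ge d,\ i_j\in\{0,\rho,\rho+1,\dots,N\}\ \forall j\}$. Let $f(\mathbf{x})=f(x_1,\dots,x_s)$ be a polynomial of the form $$f(\mathbf{x})=1+\sum_{\mathbf{j}\in\{0,\dots,N\}^s\setminus\{\underline0\}}f_{\mathbf{j}}K^{(N)}_{\mathbf{j}}(\mathbf{x})$$ with (i) $f_{\mathbf{j}}\ge0$ for all $\mathbf{j}\in\{0,\dots,N\}^s\setminus\{\underline0\}$ and (ii) $f(\mathbf{i})\le0$ for all $\mathbf{i}\in T$. Then $|\mathcal{C}|\le f(\underline0)$.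
   Context: The Krawtchouk polynomial is $K_j^{(N)}(x)=\sum_{l=0}^j(-1)^l(q-1)^{j-l}\binom xl\binom{N-x}{j-l}$, and $K^{(N)}_{\mathbf{j}}(\mathbf{x})=\prod_{p=1}^sK^{(N)}_{j_p}(x_p)$ for $\mathbf{j}=(j_1,\dots,j_s)$; $\underline0=(0,\dots,0)$. Minimum distance refers to Hamming distance; $\mathcal{C}|_{\mathcal{R}_i}$ is the projection onto coordinates in $\mathcal{R}_i$. *)

theory Defs
  imports Complex_Main "HOL-Library.FuncSet"
begin

text \<open>Words of length n over alphabet Q are lists; positions are 0-indexed,
  so the block R_{t+1} = {tN+1,...,(t+1)N} corresponds to positions tN ..< (t+1)N.\<close>

definition hamming_dist :: "'a list \<Rightarrow> 'a list \<Rightarrow> nat" where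
  "hamming_dist u v = card {i. i < length u \<and> u ! i \<noteq> v ! i}"

definition min_distance :: "'a list set \<Rightarrow> nat" where
  "min_distance C = Min {hamming_dist u v | u v. u \<in> C \<and> v \<in> C \<and> u \<noteq> v}"

definition block_proj :: "nat \<Rightarrow> nat \<Rightarrow> 'a list \<Rightarrow> 'a list" where
  "block_proj N t w = take N (drop (t * N) w)"

definition proj_code :: "nat \<Rightarrow> nat \<Rightarrow> 'a list set \<Rightarrow> 'a list set" where
  "proj_code N t C = block_proj N t ` C"

definition krawtchouk :: "nat \<Rightarrow> nat \<Rightarrow> nat \<Rightarrow> nat \<Rightarrow> real" where
  "krawtchouk q N j x = (\<Sum>l\<le>j. (-1) ^ l * (real q - 1) ^ (j - l)
      * real (x choose l) * real ((N - x) choose (j - l)))"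

definition krawtchouk_multi :: "nat \<Rightarrow> nat \<Rightarrow> nat \<Rightarrow> (nat \<Rightarrow> nat) \<Rightarrow> (nat \<Rightarrow> nat) \<Rightarrow> real" where
  "krawtchouk_multi q N s j x = (\<Prod>p<s. krawtchouk q N (j p) (x p))"

definition zero_vec :: "nat \<Rightarrow> nat \<Rightarrow> nat" where
  "zero_vec s = restrict (\<lambda>_. 0) {..<s}"

end

(* Delsarte's linear programming argument. Writing the pair (u, v) of words through the profile of
   block distances, every product Krawtchouk kernel is a Gram kernel sum_i phi_i(u) phi_i(v) on Q^n:
   on a single coordinate K^(m+1)_(j+1) = K^(m)_(j+1) + (q [a = b] - 1) K^(m)_j, and q [a = b] - 1 is
   itself a Gram kernel on Q. Since f - 1 is a nonnegative combination of these kernels, the double sum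
   of f over C x C is at least |C|^2; the sign condition on T kills the off-diagonal terms, leaving
   |C|^2 <= |C| f(0). *)

theory Submission
  imports Defs
begin

text \<open>Feature maps are indexed by \<open>nat\<close> so that the notion has no index type; any finite index set
  can be used via \<open>gram_kernelI\<close>.\<close>
definition gram_kernel :: "'a set \<Rightarrow> ('a \<Rightarrow> 'a \<Rightarrow> real) \<Rightarrow> bool" where
  "gram_kernel A K \<longleftrightarrow> (\<exists>k (\<phi> :: nat \<Rightarrow> 'a \<Rightarrow> real). \<forall>u\<in>A. \<forall>v\<in>A. K u v = (\<Sum>i<k. \<phi> i u * \<phi> i v))"

lemma gram_kernelI:
  assumes "finite I" and "\<And>u v. u \<in> A \<Longrightarrow> v \<in> A \<Longrightarrow> K u v = (\<Sum>i\<in>I. \<phi> i u * \<phi> i v)"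
  shows "gram_kernel A K"
proof -
  obtain h where h: "bij_betw h {..<card I} I"
    using ex_bij_betw_nat_finite[OF assms(1)] unfolding atLeast0LessThan ..
  show ?thesis unfolding gram_kernel_def
  proof (intro exI ballI)
    fix u v assume "u \<in> A" "v \<in> A"
    show "K u v = (\<Sum>i<card I. \<phi> (h i) u * \<phi> (h i) v)"
      unfolding assms(2)[OF \<open>u \<in> A\<close> \<open>v \<in> A\<close>] by (rule sum.reindex_bij_betw[OF h, symmetric])
  qed
qed

lemma gram_kernelE:
  assumes "gram_kernel A K"
  obtains \<phi> :: "nat \<Rightarrow> 'a \<Rightarrow> real" and k :: nat
  where "\<And>u v. u \<in> A \<Longrightarrow> v \<in> A \<Longrightarrow> K u v = (\<Sum>i<k. \<phi> i u * \<phi> i v)"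
  using assms unfolding gram_kernel_def by blast

lemma gram_kernel_cong:
  assumes "gram_kernel A K" and "\<And>u v. u \<in> A \<Longrightarrow> v \<in> A \<Longrightarrow> K u v = L u v"
  shows "gram_kernel A L"
proof -
  obtain \<phi> and k :: nat where K: "\<And>u v. u \<in> A \<Longrightarrow> v \<in> A \<Longrightarrow> K u v = (\<Sum>i<k. \<phi> i u * \<phi> i v)"
    using assms(1) by (rule gram_kernelE) (rule that)
  show ?thesis
    by (rule gram_kernelI[of "{..<k}" _ _ \<phi>]) (simp_all flip: K assms(2))
qed

lemma gram_kernel_sum_sum_nonneg:
  assumes "gram_kernel A K" and "C \<subseteq> A"
  shows "0 \<le> (\<Sum>u\<in>C. \<Sum>v\<in>C. K u v)"
proof -
  obtain \<phi> and k :: nat where K: "\<And>u v. u \<in> A \<Longrightarrow> v \<in> A \<Longrightarrow> K u v = (\<Sum>i<k. \<phi> i u * \<phi> i v)"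
    using assms(1) by (rule gram_kernelE) (rule that)
  have "(\<Sum>u\<in>C. \<Sum>v\<in>C. K u v) = (\<Sum>u\<in>C. \<Sum>v\<in>C. \<Sum>i<k. \<phi> i u * \<phi> i v)"
    using assms(2) K by (intro sum.cong) auto
  also have "\<dots> = (\<Sum>u\<in>C. \<Sum>i<k. \<Sum>v\<in>C. \<phi> i u * \<phi> i v)"
    by (rule sum.cong[OF refl], rule sum.swap)
  also have "\<dots> = (\<Sum>i<k. \<Sum>u\<in>C. \<Sum>v\<in>C. \<phi> i u * \<phi> i v)"
    by (rule sum.swap)
  also have "\<dots> = (\<Sum>i<k. (\<Sum>u\<in>C. \<phi> i u) * (\<Sum>v\<in>C. \<phi> i v))"
    by (simp add: sum_product)
  also have "\<dots> \<ge> 0" by (intro sum_nonneg) simp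
  finally show ?thesis .
qed

lemma gram_kernel_zero: "gram_kernel A (\<lambda>_ _. 0)"
  by (rule gram_kernelI[of "{}"]) auto

lemma gram_kernel_one: "gram_kernel A (\<lambda>_ _. 1)"
  by (rule gram_kernelI[of "{()}" _ _ "\<lambda>_ _. 1"]) auto

lemma gram_kernel_scale:
  assumes "gram_kernel A K" and "c \<ge> 0"
  shows "gram_kernel A (\<lambda>u v. c * K u v)"
proof -
  obtain \<phi> and k :: nat where K: "\<And>u v. u \<in> A \<Longrightarrow> v \<in> A \<Longrightarrow> K u v = (\<Sum>i<k. \<phi> i u * \<phi> i v)"
    using assms(1) by (rule gram_kernelE) (rule that)
  have sqrt: "sqrt c * a * (sqrt c * b) = c * (a * b)" for a b
  proof -
    have "sqrt c * a * (sqrt c * b) = (sqrt c * sqrt c) * (a * b)" by (simp only: mult_ac)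
    then show ?thesis using assms(2) by simp
  qed
  show ?thesis
  proof (rule gram_kernelI[of "{..<k}" _ _ "\<lambda>i u. sqrt c * \<phi> i u"])
    fix u v assume "u \<in> A" "v \<in> A"
    then show "c * K u v = (\<Sum>i<k. sqrt c * \<phi> i u * (sqrt c * \<phi> i v))"
      by (simp add: K sum_distrib_left sqrt)
  qed simp
qed

lemma gram_kernel_add:
  assumes "gram_kernel A K" and "gram_kernel A L"
  shows "gram_kernel A (\<lambda>u v. K u v + L u v)"
proof -
  obtain \<phi> and k :: nat where K: "\<And>u v. u \<in> A \<Longrightarrow> v \<in> A \<Longrightarrow> K u v = (\<Sum>i<k. \<phi> i u * \<phi> i v)"
    using assms(1) by (rule gram_kernelE) (rule that)
  obtain \<chi> and l :: nat where L: "\<And>u v. u \<in> A \<Longrightarrow> v \<in> A \<Longrightarrow> L u v = (\<Sum>i<l. \<chi> i u * \<chi> i v)"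
    using assms(2) by (rule gram_kernelE) (rule that)
  show ?thesis
    by (rule gram_kernelI[of "{..<k} <+> {..<l}" _ _ "case_sum \<phi> \<chi>"])
      (auto simp: K L sum.Plus comp_def)
qed

lemma gram_kernel_mult:
  assumes "gram_kernel A K" and "gram_kernel A L"
  shows "gram_kernel A (\<lambda>u v. K u v * L u v)"
proof -
  obtain \<phi> and k :: nat where K: "\<And>u v. u \<in> A \<Longrightarrow> v \<in> A \<Longrightarrow> K u v = (\<Sum>i<k. \<phi> i u * \<phi> i v)"
    using assms(1) by (rule gram_kernelE) (rule that)
  obtain \<chi> and l :: nat where L: "\<And>u v. u \<in> A \<Longrightarrow> v \<in> A \<Longrightarrow> L u v = (\<Sum>i<l. \<chi> i u * \<chi> i v)"
    using assms(2) by (rule gram_kernelE) (rule that)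
  show ?thesis
  proof (rule gram_kernelI[of "{..<k} \<times> {..<l}" _ _ "\<lambda>ii' u. \<phi> (fst ii') u * \<chi> (snd ii') u"])
    fix u v assume uv: "u \<in> A" "v \<in> A"
    have "K u v * L u v = (\<Sum>i<k. \<Sum>i'<l. (\<phi> i u * \<chi> i' u) * (\<phi> i v * \<chi> i' v))"
      unfolding K[OF uv] L[OF uv] sum_product by (simp add: mult_ac)
    then show "K u v * L u v = (\<Sum>ii'\<in>{..<k} \<times> {..<l}.
        (\<phi> (fst ii') u * \<chi> (snd ii') u) * (\<phi> (fst ii') v * \<chi> (snd ii') v))"
      by (simp add: sum.cartesian_product split_def)
  qed simp
qed

lemma gram_kernel_sum:
  assumes "finite J" and "\<And>j. j \<in> J \<Longrightarrow> gram_kernel A (K j)"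
  shows "gram_kernel A (\<lambda>u v. \<Sum>j\<in>J. K j u v)"
  using assms by (induction J rule: finite_induct) (auto intro: gram_kernel_zero gram_kernel_add)

lemma gram_kernel_prod:
  assumes "finite P" and "\<And>p. p \<in> P \<Longrightarrow> gram_kernel A (K p)"
  shows "gram_kernel A (\<lambda>u v. \<Prod>p\<in>P. K p u v)"
  using assms by (induction P rule: finite_induct) (auto intro: gram_kernel_one gram_kernel_mult)

lemma gram_kernel_comp:
  assumes "gram_kernel B K" and "g ` A \<subseteq> B"
  shows "gram_kernel A (\<lambda>u v. K (g u) (g v))"
proof -
  obtain \<phi> and k :: nat where K: "\<And>u v. u \<in> B \<Longrightarrow> v \<in> B \<Longrightarrow> K u v = (\<Sum>i<k. \<phi> i u * \<phi> i v)"
    using assms(1) by (rule gram_kernelE) (rule that)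
  show ?thesis
  proof (rule gram_kernelI[of "{..<k}"])
    fix u v assume "u \<in> A" "v \<in> A"
    then show "K (g u) (g v) = (\<Sum>i<k. \<phi> i (g u) * \<phi> i (g v))"
      using assms(2) by (intro K) auto
  qed simp
qed

lemma hamming_dist_Nil [simp]: "hamming_dist [] v = 0"
  unfolding hamming_dist_def by simp

lemma hamming_dist_self [simp]: "hamming_dist u u = 0"
  unfolding hamming_dist_def by simp

lemma hamming_dist_Cons:
  "hamming_dist (a # u) (b # v) = of_bool (a \<noteq> b) + hamming_dist u v"
proof -
  have "{i. i < length (a # u) \<and> (a # u) ! i \<noteq> (b # v) ! i}
     = (if a = b then {} else {0}) \<union> Suc ` {i. i < length u \<and> u ! i \<noteq> v ! i}"
    by (rule set_eqI, case_tac x) auto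
  then show ?thesis
    unfolding hamming_dist_def by (simp add: card_image)
qed

lemma hamming_dist_le_length: "hamming_dist u v \<le> length u"
  unfolding hamming_dist_def by (rule order_trans[OF card_mono[of "{..<length u}"]]) auto

lemma hamming_dist_append:
  "length x = length x' \<Longrightarrow> hamming_dist (x @ y) (x' @ y') = hamming_dist x x' + hamming_dist y y'"
proof (induction x arbitrary: x')
  case (Cons a x)
  then show ?case by (cases x') (auto simp: hamming_dist_Cons)
qed simp

lemma length_block_proj:
  assumes "length u = s * N" "p < s"
  shows "length (block_proj N p u) = N"
proof -
  have "Suc p * N \<le> s * N" using assms(2) by (intro mult_le_mono1) simp
  then show ?thesis using assms(1) unfolding block_proj_def by simp
qed

lemma set_block_proj_subset: "set (block_proj N p u) \<subseteq> set u"
  unfolding block_proj_def by (meson order_trans set_drop_subset set_take_subset)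

lemma hamming_dist_sum_blocks:
  "length u = s * N \<Longrightarrow> length v = s * N \<Longrightarrow>
   hamming_dist u v = (\<Sum>p<s. hamming_dist (block_proj N p u) (block_proj N p v))"
proof (induction s arbitrary: u v)
  case (Suc s)
  have "hamming_dist u v = hamming_dist (take N u @ drop N u) (take N v @ drop N v)" by simp
  also have "\<dots> = hamming_dist (take N u) (take N v) + hamming_dist (drop N u) (drop N v)"
    using Suc.prems by (intro hamming_dist_append) simp
  also have "hamming_dist (drop N u) (drop N v)
      = (\<Sum>p<s. hamming_dist (block_proj N p (drop N u)) (block_proj N p (drop N v)))"
    using Suc.prems by (intro Suc.IH) auto
  finally show ?case
    by (subst sum.lessThan_Suc_shift)
      (simp add: block_proj_def drop_drop add.commute del: sum.lessThan_Suc)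
qed simp

lemma min_distance_le_hamming_dist:
  assumes "finite C" "u \<in> C" "v \<in> C" "u \<noteq> v"
  shows "min_distance C \<le> hamming_dist u v"
proof -
  have "{hamming_dist u v | u v. u \<in> C \<and> v \<in> C \<and> u \<noteq> v} \<subseteq> case_prod hamming_dist ` (C \<times> C)"
    by auto
  then have "finite {hamming_dist u v | u v. u \<in> C \<and> v \<in> C \<and> u \<noteq> v}"
    by (rule finite_subset) (use assms(1) in simp)
  then show ?thesis
    unfolding min_distance_def by (rule Min_le) (use assms(2-4) in blast)
qed

lemma krawtchouk_0 [simp]: "krawtchouk q m 0 x = 1"
  unfolding krawtchouk_def by simp

lemma krawtchouk_at_0: "krawtchouk q m j 0 = (real q - 1) ^ j * real (m choose j)"
  unfolding krawtchouk_def by (simp add: sum.atMost_shift)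

text \<open>Pascal's rule, applied to the binomial coefficient in \<open>m - x\<close> here and in \<open>x\<close> in the
  next lemma.\<close>
lemma krawtchouk_Suc_Suc:
  assumes "x \<le> m"
  shows "krawtchouk q (Suc m) (Suc j) x = krawtchouk q m (Suc j) x + (real q - 1) * krawtchouk q m j x"
proof -
  have sm: "Suc m - x = Suc (m - x)" using assms by simp
  define a where "a l = (-1::real) ^ l * real (x choose l)" for l
  have "krawtchouk q (Suc m) (Suc j) x = (\<Sum>l\<le>Suc j. a l * (real q - 1) ^ (Suc j - l) * real (Suc (m-x) choose (Suc j - l)))"
    unfolding krawtchouk_def a_def sm by (intro sum.cong) auto
  also have "\<dots> = (\<Sum>l\<le>j. a l * (real q - 1) ^ (Suc j - l) * real (Suc (m-x) choose (Suc j - l))) + a (Suc j)"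
    by simp
  also have "(\<Sum>l\<le>j. a l * (real q - 1) ^ (Suc j - l) * real (Suc (m-x) choose (Suc j - l)))
     = (\<Sum>l\<le>j. a l * (real q - 1) ^ (Suc j - l) * real ((m-x) choose (Suc j - l)))
       + (real q - 1) * (\<Sum>l\<le>j. a l * (real q - 1) ^ (j - l) * real ((m-x) choose (j - l)))"
    unfolding sum_distrib_left sum.distrib[symmetric]
  proof (intro sum.cong refl)
    fix l assume "l \<in> {..j}"
    then have e: "Suc j - l = Suc (j - l)" by auto
    show "a l * (real q - 1) ^ (Suc j - l) * real (Suc (m-x) choose (Suc j - l)) =
        a l * (real q - 1) ^ (Suc j - l) * real ((m-x) choose (Suc j - l)) +
        (real q - 1) * (a l * (real q - 1) ^ (j - l) * real ((m-x) choose (j - l)))"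
      unfolding e by (simp add: algebra_simps)
  qed
  also have "krawtchouk q m (Suc j) x = (\<Sum>l\<le>j. a l * (real q - 1) ^ (Suc j - l) * real ((m-x) choose (Suc j - l))) + a (Suc j)"
    unfolding krawtchouk_def a_def by (simp add: mult_ac)
  moreover have "krawtchouk q m j x = (\<Sum>l\<le>j. a l * (real q - 1) ^ (j - l) * real ((m-x) choose (j - l)))"
    unfolding krawtchouk_def a_def by (intro sum.cong) auto
  ultimately show ?thesis by simp
qed

lemma krawtchouk_Suc_Suc_Suc:
  assumes "x \<le> m"
  shows "krawtchouk q (Suc m) (Suc j) (Suc x) = krawtchouk q m (Suc j) x - krawtchouk q m j x"
proof -
  define b where "b l = (real q - 1) ^ (Suc j - l) * real ((m - x) choose (Suc j - l))" for l
  have "krawtchouk q (Suc m) (Suc j) (Suc x) = (\<Sum>l\<le>Suc j. (-1) ^ l * real (Suc x choose l) * b l)"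
    unfolding krawtchouk_def b_def by (intro sum.cong) auto
  also have "\<dots> = (\<Sum>l\<le>Suc j. (-1) ^ l * real (x choose l) * b l)
       + (\<Sum>l\<le>Suc j. (-1) ^ l * real (if l = 0 then 0 else x choose (l - 1)) * b l)"
    unfolding sum.distrib[symmetric]
  proof (intro sum.cong refl)
    fix l assume "l \<in> {..Suc j}"
    show "(-1) ^ l * real (Suc x choose l) * b l = (-1) ^ l * real (x choose l) * b l +
       (-1) ^ l * real (if l = 0 then 0 else x choose (l - 1)) * b l"
      by (cases l) (auto simp: algebra_simps)
  qed
  also have "(\<Sum>l\<le>Suc j. (-1) ^ l * real (if l = 0 then 0 else x choose (l - 1)) * b l)
      = (\<Sum>l\<le>j. (-1) ^ Suc l * real (x choose l) * b (Suc l))"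
    by (subst sum.atMost_Suc_shift) simp
  also have "\<dots> = - krawtchouk q m j x"
    unfolding krawtchouk_def b_def sum_negf[symmetric] by (intro sum.cong) auto
  also have "(\<Sum>l\<le>Suc j. (-1) ^ l * real (x choose l) * b l) = krawtchouk q m (Suc j) x"
    unfolding krawtchouk_def b_def by (intro sum.cong) auto
  finally show ?thesis by simp
qed

lemma krawtchouk_hamming_dist_Cons:
  "krawtchouk q (Suc (length u)) (Suc j) (hamming_dist (a # u) (b # v))
    = krawtchouk q (length u) (Suc j) (hamming_dist u v)
      + (of_bool (a = b) * real q - 1) * krawtchouk q (length u) j (hamming_dist u v)"
proof -
  have le: "hamming_dist u v \<le> length u" by (rule hamming_dist_le_length)
  show ?thesis
    by (cases "a = b") (simp_all add: hamming_dist_Cons krawtchouk_Suc_Suc[OF le] krawtchouk_Suc_Suc_Suc[OF le])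
qed

definition words :: "nat \<Rightarrow> 'a set \<Rightarrow> 'a list set" where
  "words m Q = {w. length w = m \<and> set w \<subseteq> Q}"

lemma gram_kernel_equality:
  assumes "finite Q"
  shows "gram_kernel Q (\<lambda>a b. of_bool (a = b) * real (card Q) - 1)"
proof (cases "Q = {}")
  case False
  let ?q = "real (card Q)"
  have q: "?q > 0" using assms False by (simp add: card_gt_0_iff)
  show ?thesis
  proof (rule gram_kernelI[of Q _ _ "\<lambda>c a. (of_bool (a = c) * ?q - 1) / sqrt ?q"])
    fix a b assume ab: "a \<in> Q" "b \<in> Q"
    have "(\<Sum>c\<in>Q. (of_bool (a = c) * ?q - 1) * (of_bool (b = c) * ?q - 1))
        = (\<Sum>c\<in>Q. ?q * ?q * (if a = b \<and> c = a then 1 else 0)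
            - ?q * (if c = a then 1 else 0) - ?q * (if c = b then 1 else 0) + 1)"
      by (intro sum.cong) (auto simp: algebra_simps)
    also have "\<dots> = ?q * (of_bool (a = b) * ?q - 1)"
      using assms ab by (cases "a = b")
        (simp_all add: sum.distrib sum_subtractf sum_distrib_left[symmetric] algebra_simps)
    finally show "of_bool (a = b) * ?q - 1
        = (\<Sum>c\<in>Q. (of_bool (a = c) * ?q - 1) / sqrt ?q * ((of_bool (b = c) * ?q - 1) / sqrt ?q))"
      using q by (simp add: sum_divide_distrib[symmetric] field_simps)
  qed (rule assms)
qed (simp add: gram_kernel_def)

lemma gram_kernel_krawtchouk:
  assumes "finite Q"
  shows "gram_kernel (words m Q) (\<lambda>u v. krawtchouk (card Q) m j (hamming_dist u v))"
proof (induction m arbitrary: j)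
  case 0
  have "gram_kernel (words 0 Q) (\<lambda>u v. of_bool (j = 0) * 1)"
    by (intro gram_kernel_scale gram_kernel_one) simp
  then show ?case
    by (rule gram_kernel_cong) (auto simp: words_def krawtchouk_at_0)
next
  case (Suc m)
  show ?case
  proof (cases j)
    case 0
    then show ?thesis using gram_kernel_one by simp
  next
    case (Suc j')
    have tl: "tl ` words (Suc m) Q \<subseteq> words m Q" and hd: "hd ` words (Suc m) Q \<subseteq> Q"
      by (auto simp: words_def length_Suc_conv)
    have "gram_kernel (words (Suc m) Q) (\<lambda>u v.
        krawtchouk (card Q) m (Suc j') (hamming_dist (tl u) (tl v))
        + (of_bool (hd u = hd v) * real (card Q) - 1) * krawtchouk (card Q) m j' (hamming_dist (tl u) (tl v)))"
      using Suc.IH gram_kernel_equality[OF assms]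
      by (intro gram_kernel_add gram_kernel_mult gram_kernel_comp[OF _ tl] gram_kernel_comp[OF _ hd])
    then show ?thesis
    proof (rule gram_kernel_cong)
      fix u v assume "u \<in> words (Suc m) Q" "v \<in> words (Suc m) Q"
      then obtain a u' b v' where "u = a # u'" "v = b # v'" "length u' = m" "length v' = m"
        by (auto simp: words_def length_Suc_conv)
      then show "krawtchouk (card Q) m (Suc j') (hamming_dist (tl u) (tl v))
        + (of_bool (hd u = hd v) * real (card Q) - 1) * krawtchouk (card Q) m j' (hamming_dist (tl u) (tl v))
        = krawtchouk (card Q) (Suc m) j (hamming_dist u v)"
        using krawtchouk_hamming_dist_Cons[of "card Q" u' j' a b v'] by (simp add: Suc)
    qed
  qed
qed

definition block_dist :: "nat \<Rightarrow> nat \<Rightarrow> 'a list \<Rightarrow> 'a list \<Rightarrow> nat \<Rightarrow> nat" where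
  "block_dist N s u v = (\<lambda>p\<in>{..<s}. hamming_dist (block_proj N p u) (block_proj N p v))"

lemma block_dist_self: "block_dist N s u u = zero_vec s"
  unfolding block_dist_def zero_vec_def by simp

lemma sum_block_dist:
  "length u = s * N \<Longrightarrow> length v = s * N \<Longrightarrow> (\<Sum>p<s. block_dist N s u v p) = hamming_dist u v"
  by (simp add: block_dist_def hamming_dist_sum_blocks)

lemma block_dist_in_PiE:
  assumes "length u = s * N"
    and "\<And>p. p < s \<Longrightarrow> block_proj N p u \<noteq> block_proj N p v
           \<Longrightarrow> \<rho> \<le> hamming_dist (block_proj N p u) (block_proj N p v)"
  shows "block_dist N s u v \<in> PiE {..<s} (\<lambda>_. {0} \<union> {\<rho>..N})"
  unfolding block_dist_def
proof (subst restrict_PiE_iff, intro ballI)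
  fix p assume "p \<in> {..<s}"
  then have p: "p < s" by simp
  have "hamming_dist (block_proj N p u) (block_proj N p v) \<le> N"
    using hamming_dist_le_length length_block_proj[OF assms(1) p] by metis
  then show "hamming_dist (block_proj N p u) (block_proj N p v) \<in> {0} \<union> {\<rho>..N}"
    using assms(2)[OF p] by (cases "block_proj N p u = block_proj N p v") auto
qed

lemma block_proj_words:
  assumes "p < s"
  shows "block_proj N p ` words (s * N) Q \<subseteq> words N Q"
  using length_block_proj[OF _ assms] set_block_proj_subset by (fastforce simp: words_def)

lemma gram_kernel_krawtchouk_multi:
  assumes "finite Q"
  shows "gram_kernel (words (s * N) Q) (\<lambda>u v. krawtchouk_multi (card Q) N s j (block_dist N s u v))"
proof -
  have "gram_kernel (words (s * N) Q) (\<lambda>u v. \<Prod>p<s.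
      krawtchouk (card Q) N (j p) (hamming_dist (block_proj N p u) (block_proj N p v)))"
    using gram_kernel_krawtchouk[OF assms]
    by (intro gram_kernel_prod gram_kernel_comp[OF _ block_proj_words]) auto
  then show ?thesis
    by (rule gram_kernel_cong) (simp add: krawtchouk_multi_def block_dist_def)
qed

lemma card_le_of_gram_kernel:
  assumes "C \<subseteq> A" "finite C" "C \<noteq> {}"
    and "gram_kernel A (\<lambda>u v. F u v - 1)"
    and "\<And>u. u \<in> C \<Longrightarrow> F u u \<le> b"
    and "\<And>u v. u \<in> C \<Longrightarrow> v \<in> C \<Longrightarrow> u \<noteq> v \<Longrightarrow> F u v \<le> 0"
  shows "real (card C) \<le> b"
proof -
  have "0 \<le> (\<Sum>u\<in>C. \<Sum>v\<in>C. F u v - 1)"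
    using assms(4,1) by (rule gram_kernel_sum_sum_nonneg)
  then have "real (card C) * real (card C) \<le> (\<Sum>u\<in>C. \<Sum>v\<in>C. F u v)"
    by (simp add: sum_subtractf)
  also have "\<dots> \<le> (\<Sum>u\<in>C. b)"
  proof (rule sum_mono)
    fix u assume u: "u \<in> C"
    have "(\<Sum>v\<in>C. F u v) = F u u + (\<Sum>v\<in>C - {u}. F u v)"
      using assms(2) u by (simp add: sum.remove)
    also have "\<dots> \<le> b + 0"
      using assms(5,6) u by (intro add_mono sum_nonpos) auto
    finally show "(\<Sum>v\<in>C. F u v) \<le> b" by simp
  qed
  also have "\<dots> = real (card C) * b" by simp
  finally show ?thesis
    using assms(2,3) by (simp add: card_gt_0_iff)
qed

lemma krawtchouk_multi_zero_vec_nonneg: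
  assumes "q \<ge> 1"
  shows "0 \<le> krawtchouk_multi q N s j (zero_vec s)"
  unfolding krawtchouk_multi_def zero_vec_def using assms
  by (intro prod_nonneg) (simp add: krawtchouk_at_0)

theorem corollary3:
  fixes q r \<rho> s N n d :: nat
    and Q :: "'a set"
    and C :: "'a list set"
    and fc :: "(nat \<Rightarrow> nat) \<Rightarrow> real"
    and f :: "(nat \<Rightarrow> nat) \<Rightarrow> real"
  assumes "q \<ge> 2" "r \<ge> 1" "\<rho> \<ge> 2" "s \<ge> 1"
    and "N = r + \<rho> - 1" "n = s * N"
    and "finite Q" "card Q = q"
    and "\<forall>c\<in>C. length c = n \<and> set c \<subseteq> Q"
    and "d = min_distance C"
    and "\<forall>t<s. \<forall>u\<in>proj_code N t C. \<forall>v\<in>proj_code N t C. u \<noteq> v \<longrightarrow> hamming_dist u v \<ge> \<rho>"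
    and "f = (\<lambda>x. 1 + (\<Sum>j \<in> (PiE {..<s} (\<lambda>_. {0..N})) - {zero_vec s}.
                 fc j * krawtchouk_multi q N s j x))"
    and "\<forall>j \<in> (PiE {..<s} (\<lambda>_. {0..N})) - {zero_vec s}. fc j \<ge> 0"
    and "\<forall>i \<in> {i \<in> PiE {..<s} (\<lambda>_. {0} \<union> {\<rho>..N}). (\<Sum>p<s. i p) \<ge> d}. f i \<le> 0"
  shows "real (card C) \<le> f (zero_vec s)"
proof -
  have C_words: "C \<subseteq> words (s * N) Q"
    using assms(6,9) by (auto simp: words_def)
  have finite_C: "finite C"
    by (rule finite_subset[OF C_words])
      (simp add: words_def conj_commute finite_lists_length_eq assms(7))
  have "gram_kernel (words (s * N) Q) (\<lambda>u v. \<Sum>j \<in> PiE {..<s} (\<lambda>_. {0..N}) - {zero_vec s}.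
      fc j * krawtchouk_multi (card Q) N s j (block_dist N s u v))"
    using assms(13) gram_kernel_krawtchouk_multi[OF assms(7)]
    by (intro gram_kernel_sum gram_kernel_scale) (auto intro: finite_PiE)
  then have kernel: "gram_kernel (words (s * N) Q) (\<lambda>u v. f (block_dist N s u v) - 1)"
    by (rule gram_kernel_cong) (simp add: assms(8,12))
  have off_diagonal: "f (block_dist N s u v) \<le> 0" if "u \<in> C" "v \<in> C" "u \<noteq> v" for u v
  proof -
    have "length u = s * N" "length v = s * N" using that(1,2) assms(6,9) by auto
    moreover have "block_dist N s u v \<in> PiE {..<s} (\<lambda>_. {0} \<union> {\<rho>..N})"
      using \<open>length u = s * N\<close> assms(11) that(1,2)
      by (intro block_dist_in_PiE) (auto simp: proj_code_def)
    moreover have "d \<le> hamming_dist u v"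
      unfolding assms(10) using finite_C that by (rule min_distance_le_hamming_dist)
    ultimately show ?thesis using assms(14) by (simp add: sum_block_dist)
  qed
  show ?thesis
  proof (cases "C = {}")
    case True
    have "1 \<le> f (zero_vec s)"
      using assms(1,13) krawtchouk_multi_zero_vec_nonneg[of q]
      by (simp add: assms(12)) (intro sum_nonneg mult_nonneg_nonneg; simp)
    then show ?thesis using True by simp
  next
    case False
    show ?thesis
      by (rule card_le_of_gram_kernel[OF C_words finite_C False kernel _ off_diagonal])
        (simp add: block_dist_self)
  qed
qed

end
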